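(* If $v/u=q^{-r}$ for some nonnegative integer $r$, then \[ {}_3\phi_2\left(\begin{array}{c}y/x,\ q/abt,\ q/avt\\ yq/a,\ q/aut\end{array};q,\frac{xbvt}{u}\right)=\frac{(ybt,xq/a;q)_\infty}{(xbt,yq/a;q)_\infty}\,{}_3\phi_2\left(\begin{array}{c}y/x,\ v/u,\ q/abt\\ q/xbt,\ q/aut\end{array};q,q\right). \]
   Context: $q$ is a fixed complex number with $0<|q|<1$. $(a;q)_\infty=\prod_{k\ge0}(1-aq^k)$, $(a;q)_n=(a;q)_\infty/(aq^n;q)_\infty$, $(a_1,\dots,a_m;q)_n=\prod_i(a_i;q)_n$. ${}_r\phi_s\left(\begin{array}{c}a_1,\dots,a_r\\ b_1,\dots,b_s\end{array};q,x\right)=\sum_{n\ge0}\frac{(a_1,\dots,a_r;q)_n}{(q,b_1,\dots,b_s;q)_n}\big[(-1)^nq^{\binom n2}\big]^{1+s-r}x^n$. *)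

theory Defs
  imports "HOL-Analysis.Analysis"
begin

definition qpoch :: "complex \<Rightarrow> complex \<Rightarrow> nat \<Rightarrow> complex" where
  "qpoch a q n = (\<Prod>k<n. (1 - a * q ^ k))"

definition qpoch_inf :: "complex \<Rightarrow> complex \<Rightarrow> complex" where
  "qpoch_inf a q = (\<Prod>k. (1 - a * q ^ k))"

definition phi_term :: "complex list \<Rightarrow> complex list \<Rightarrow> complex \<Rightarrow> complex \<Rightarrow> nat \<Rightarrow> complex" where
  "phi_term as bs q z n =
     (\<Prod>a\<leftarrow>as. qpoch a q n) / (qpoch q q n * (\<Prod>b\<leftarrow>bs. qpoch b q n))
     * (((-1) ^ n * q ^ (n choose 2)) powi (1 + int (length bs) - int (length as))) * z ^ n"

definition basic_hyp :: "complex list \<Rightarrow> complex list \<Rightarrow> complex \<Rightarrow> complex \<Rightarrow> complex" where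
  "basic_hyp as bs q z = (\<Sum>n. phi_term as bs q z n)"

end

theory Submission imports Defs begin

text \<open>Put \<open>D = q/(aut)\<close> and \<open>w = xbt\<close>, so that \<open>q/(avt) = D q\<^sup>r\<close> and the argument of the
  left-hand series is \<open>w q\<^sup>-\<^sup>r\<close>. The q-Chu--Vandermonde sum writes \<open>(Dq\<^sup>r;q)\<^sub>n / (D;q)\<^sub>n\<close> as
  \<open>q\<^sup>r\<^sup>n\<close> times a terminating \<open>\<^sub>2\<phi>\<^sub>1\<close> whose \<open>k\<close>-th term vanishes unless \<open>k \<le> min n r\<close>.
  Inserting it into the left-hand \<open>\<^sub>3\<phi>\<^sub>2\<close> and exchanging the summations (finite in \<open>k\<close>),
  the \<open>k\<close>-th inner series becomes, after the shift \<open>n = m + k\<close>, a \<open>\<^sub>2\<phi>\<^sub>1\<close> with argument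
  \<open>c/(ab)\<close>, which the q-Gauss sum evaluates; the resulting factor is the \<open>k\<close>-th term of the
  right-hand \<open>\<^sub>3\<phi>\<^sub>2\<close>. The q-Gauss sum itself follows from a contiguity relation in the
  argument \<open>z \<mapsto> zq\<close>, iterated \<open>N\<close> times, and Tannery's theorem as \<open>N \<rightarrow> \<infinity>\<close>.\<close>

lemma qpoch_0 [simp]: "qpoch a q 0 = 1"
  by (simp add: qpoch_def)

lemma qpoch_Suc: "qpoch a q (Suc n) = qpoch a q n * (1 - a * q ^ n)"
  by (simp add: qpoch_def lessThan_Suc mult.commute)

lemma qpoch_add: "qpoch a q (m + n) = qpoch a q m * qpoch (a * q ^ m) q n"
  by (induction n) (simp_all add: qpoch_Suc power_add mult.assoc)

lemma qpoch_Suc_left: "qpoch a q (Suc n) = (1 - a) * qpoch (a * q) q n"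
  using qpoch_add[of a q 1 n] by (simp add: qpoch_def)

lemma qpoch_zero_left [simp]: "qpoch 0 q n = 1"
  by (simp add: qpoch_def)

lemma qpoch_eq_0_iff: "qpoch a q n = 0 \<longleftrightarrow> (\<exists>k<n. a * q ^ k = 1)"
  by (auto simp: qpoch_def)

lemma qpoch_q_nonzero:
  assumes "cmod q < 1"
  shows "qpoch q q n \<noteq> 0"
proof -
  have "cmod (q * q ^ k) < 1" for k
    using assms by (simp add: norm_mult norm_power power_less_one_iff flip: power_Suc)
  then have "q * q ^ k \<noteq> 1" for k
    by (metis norm_one order_less_irrefl)
  then show ?thesis
    by (simp add: qpoch_eq_0_iff)
qed

lemma qpoch_tendsto:
  assumes "cmod q < 1"
  shows "(\<lambda>n. qpoch a q n) \<longlonglongrightarrow> qpoch_inf a q"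
proof -
  have "summable (\<lambda>k. norm ((1 - a * q ^ k) - 1))"
    using assms by (simp add: norm_mult norm_power summable_geometric)
  then have "convergent_prod (\<lambda>k. 1 - a * q ^ k)"
    by (intro abs_convergent_prod_imp_convergent_prod summable_imp_abs_convergent_prod)
  then have "(\<lambda>n. qpoch a q (Suc n)) \<longlonglongrightarrow> qpoch_inf a q"
    unfolding qpoch_inf_def qpoch_def lessThan_Suc_atMost by (rule convergent_prod_LIMSEQ)
  then show ?thesis by (rule LIMSEQ_imp_Suc)
qed

lemma qpoch_inf_split:
  assumes "cmod q < 1"
  shows "qpoch_inf a q = qpoch a q k * qpoch_inf (a * q ^ k) q"
proof -
  have "(\<lambda>m. qpoch a q (m + k)) \<longlonglongrightarrow> qpoch_inf a q"
    using qpoch_tendsto[OF assms] by (rule LIMSEQ_ignore_initial_segment)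
  moreover have "(\<lambda>m. qpoch a q (m + k)) \<longlonglongrightarrow> qpoch a q k * qpoch_inf (a * q ^ k) q"
    unfolding add.commute[of _ k] qpoch_add by (intro tendsto_mult tendsto_const qpoch_tendsto assms)
  ultimately show ?thesis by (rule LIMSEQ_unique)
qed

lemma norm_qpoch_ge_half:
  assumes q: "cmod q < 1" and c: "cmod c \<le> (1 - cmod q) / 2"
  shows "1 / 2 \<le> norm (qpoch c q k)"
proof -
  have "2 * cmod c \<le> 1 - cmod q"
    using c by simp
  then have "cmod c \<le> 1"
    using norm_ge_zero[of q] by linarith
  then have small: "cmod c * cmod q ^ j \<in> {0..1}" for j
    using q by (auto intro!: mult_le_one power_le_one)
  have "(\<Sum>j<k. cmod c * cmod q ^ j) = cmod c * (1 - cmod q ^ k) / (1 - cmod q)"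
    using q by (simp add: sum_distrib_left[symmetric] sum_gp_strict)
  also have "\<dots> \<le> cmod c / (1 - cmod q)"
    using q by (intro divide_right_mono mult_left_le) auto
  also have "\<dots> \<le> 1 / 2"
    using c q by (simp add: field_simps)
  finally have "1 / 2 \<le> 1 - (\<Sum>j<k. cmod c * cmod q ^ j)"
    by simp
  also have "\<dots> \<le> (\<Prod>j<k. 1 - cmod c * cmod q ^ j)"
    using small by (intro Weierstrass_prod_ineq)
  also have "\<dots> \<le> (\<Prod>j<k. cmod (1 - c * q ^ j))"
    using small norm_triangle_ineq2[of 1 "c * q ^ _"]
    by (intro prod_mono) (auto simp: norm_mult norm_power)
  also have "\<dots> = norm (qpoch c q k)"
    by (simp add: qpoch_def prod_norm)
  finally show ?thesis .
qed

lemma norm_mult_power_less_one: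
  fixes z q :: complex
  assumes "cmod q \<le> 1" and "cmod z < 1"
  shows "cmod (z * q ^ n) < 1"
proof -
  have "cmod z * cmod q ^ n \<le> cmod z"
    using assms by (intro mult_left_le power_le_one) auto
  then show ?thesis
    using assms(2) by (simp add: norm_mult norm_power)
qed

lemma phi_term_2_1:
  "phi_term [a, b] [c] q z n = qpoch a q n * qpoch b q n / (qpoch q q n * qpoch c q n) * z ^ n"
  by (simp add: phi_term_def mult.assoc)

lemma phi_term_3_2:
  "phi_term [a1, a2, a3] [b1, b2] q z n
     = qpoch a1 q n * qpoch a2 q n * qpoch a3 q n / (qpoch q q n * (qpoch b1 q n * qpoch b2 q n)) * z ^ n"
  by (simp add: phi_term_def mult.assoc)

lemma phi_term_2_1_Suc:
  assumes "cmod q < 1" and "qpoch c q (Suc n) \<noteq> 0"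
  shows "phi_term [a, b] [c] q z (Suc n) = phi_term [a, b] [c] q z n *
     ((1 - a * q ^ n) * (1 - b * q ^ n) * z / ((1 - q * q ^ n) * (1 - c * q ^ n)))"
proof -
  have "qpoch q q (Suc n) \<noteq> 0"
    using qpoch_q_nonzero assms(1) by blast
  with assms(2) show ?thesis
    by (simp add: phi_term_2_1 qpoch_Suc field_simps)
qed

lemma summable_norm_phi_term_2_1:
  assumes q: "cmod q < 1" and z: "cmod z < 1" and c: "\<And>n. qpoch c q n \<noteq> 0"
  shows "summable (\<lambda>n. norm (phi_term [a, b] [c] q z n))"
proof -
  define \<rho> where
    "\<rho> n = cmod ((1 - a * q ^ n) * (1 - b * q ^ n) * z / ((1 - q * q ^ n) * (1 - c * q ^ n)))" for n
  have "\<rho> \<longlonglongrightarrow> cmod ((1 - a * 0) * (1 - b * 0) * z / ((1 - q * 0) * (1 - c * 0)))"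
    unfolding \<rho>_def by (intro tendsto_intros LIMSEQ_power_zero q) simp_all
  then have "\<rho> \<longlonglongrightarrow> cmod z"
    by simp
  moreover have "cmod z < (1 + cmod z) / 2"
    using z by simp
  ultimately have "eventually (\<lambda>n. \<rho> n < (1 + cmod z) / 2) sequentially"
    by (rule order_tendstoD)
  then obtain N where N: "\<And>n. n \<ge> N \<Longrightarrow> \<rho> n < (1 + cmod z) / 2"
    by (auto simp: eventually_sequentially)
  show ?thesis
  proof (rule summable_ratio_test[of "(1 + cmod z) / 2" N])
    fix n assume "N \<le> n"
    have "norm (norm (phi_term [a, b] [c] q z (Suc n))) = norm (phi_term [a, b] [c] q z n) * \<rho> n"
      unfolding phi_term_2_1_Suc[OF q c] \<rho>_def by (simp only: real_norm_def abs_norm_cancel abs_mult norm_mult)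
    also have "\<dots> \<le> norm (phi_term [a, b] [c] q z n) * ((1 + cmod z) / 2)"
      using N[OF \<open>N \<le> n\<close>] by (intro mult_left_mono) auto
    finally show "norm (norm (phi_term [a, b] [c] q z (Suc n)))
        \<le> (1 + cmod z) / 2 * norm (norm (phi_term [a, b] [c] q z n))"
      by (simp add: mult.commute)
  qed (use z in simp)
qed

lemma summable_phi_term_2_1:
  assumes "cmod q < 1" and "cmod z < 1" and "\<And>n. qpoch c q n \<noteq> 0"
  shows "summable (phi_term [a, b] [c] q z)"
  using summable_norm_phi_term_2_1[OF assms] by (rule summable_norm_cancel)

lemma phi_term_2_1_mult_q:
  assumes q: "cmod q < 1" and c: "\<And>n. qpoch c q n \<noteq> 0"
  shows "phi_term [a, b] [c * q] q (z * q) n = phi_term [a, b] [c] q z n * q ^ n * (1 - c) / (1 - c * q ^ n)"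
proof -
  have "1 - c \<noteq> 0" "1 - c * q ^ n \<noteq> 0"
    using c[of 1] c[of "Suc n"] by (simp_all add: qpoch_def qpoch_Suc)
  moreover have shift: "qpoch (c * q) q n = qpoch c q n * (1 - c * q ^ n) / (1 - c)"
    using qpoch_Suc_left[of c q n] qpoch_Suc[of c q n] calculation by (simp add: field_simps)
  ultimately show ?thesis
    unfolding phi_term_2_1 shift using c[of n] qpoch_q_nonzero[OF q, of n]
    by (simp add: power_mult_distrib field_simps)
qed

lemma q_gauss_contiguity_certificate:
  assumes q: "cmod q < 1" and c: "\<And>n. qpoch (a * b * z) q n \<noteq> 0"
  shows "(1 - a * b * z) * (1 - z) * phi_term [a, b] [a * b * z] q z n
       - (1 - b * z) * (1 - a * z) * phi_term [a, b] [a * b * z * q] q (z * q) n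
     = (1 - a * b * z) * phi_term [a, b] [a * b * z] q z n * (1 - q ^ n)
       - (1 - a * b * z) * phi_term [a, b] [a * b * z] q z (Suc n) * (1 - q ^ Suc n)"
proof -
  define c where "c = a * b * z"
  define T where "T = phi_term [a, b] [c] q z"
  define x where "x = q ^ n"
  have c': "\<And>n. qpoch c q n \<noteq> 0"
    using c by (simp add: c_def)
  have cn: "1 - c * x \<noteq> 0"
    using c'[of "Suc n"] by (simp add: qpoch_Suc x_def)
  have "(1 - c) * (1 - z) * T n - (1 - b * z) * (1 - a * z) * phi_term [a, b] [c * q] q (z * q) n
      = (1 - c) * T n * ((1 - z) * (1 - c * x) - (1 - b * z) * (1 - a * z) * x) / (1 - c * x)"
    unfolding T_def phi_term_2_1_mult_q[OF q c'] using cn by (simp add: x_def field_simps)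
  also have "(1 - z) * (1 - c * x) - (1 - b * z) * (1 - a * z) * x
      = (1 - x) * (1 - c * x) - (1 - a * x) * (1 - b * x) * z"
    by (simp add: c_def algebra_simps)
  also have "(1 - c) * T n * \<dots> / (1 - c * x)
      = (1 - c) * T n * (1 - x) - (1 - c) * (T n * ((1 - a * x) * (1 - b * x) * z / (1 - c * x)))"
    using cn by (simp add: field_simps)
  also have "T n * ((1 - a * x) * (1 - b * x) * z / (1 - c * x)) = T (Suc n) * (1 - q ^ Suc n)"
    using qpoch_q_nonzero[OF q, of "Suc n"] by (simp add: T_def phi_term_2_1_Suc[OF q c'] qpoch_Suc x_def)
  finally show ?thesis
    by (simp add: T_def c_def x_def)
qed

lemma q_gauss_contiguity:
  assumes q: "cmod q < 1" and z: "cmod z < 1" and c: "\<And>n. qpoch (a * b * z) q n \<noteq> 0"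
  shows "(1 - a * b * z) * (1 - z) * basic_hyp [a, b] [a * b * z] q z
       = (1 - b * z) * (1 - a * z) * basic_hyp [a, b] [a * b * (z * q)] q (z * q)"
proof -
  define T where "T = phi_term [a, b] [a * b * z] q z"
  define T' where "T' = phi_term [a, b] [a * b * z * q] q (z * q)"
  define G where "G n = - (1 - a * b * z) * T n * (1 - q ^ n)" for n
  have "cmod (z * q) < 1"
    using norm_mult_power_less_one[of q z 1] q z by simp
  moreover have "qpoch (a * b * z * q) q n \<noteq> 0" for n
    using c[of "Suc n"] by (simp add: qpoch_Suc_left)
  ultimately have sT: "summable T" and sT': "summable T'"
    using summable_phi_term_2_1[OF q z c] summable_phi_term_2_1[OF q] by (simp_all add: T_def T'_def)
  have "G \<longlonglongrightarrow> - (1 - a * b * z) * 0 * (1 - 0)"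
    unfolding G_def by (intro tendsto_intros LIMSEQ_power_zero q summable_LIMSEQ_zero sT)
  then have "(\<lambda>n. G (Suc n) - G n) sums 0"
    using telescope_sums[of G 0] by (simp add: G_def)
  moreover have "(1 - a * b * z) * (1 - z) * T n - (1 - b * z) * (1 - a * z) * T' n = G (Suc n) - G n" for n
    unfolding T_def T'_def G_def q_gauss_contiguity_certificate[OF q c] by (simp add: algebra_simps)
  ultimately have "(\<lambda>n. (1 - a * b * z) * (1 - z) * T n - (1 - b * z) * (1 - a * z) * T' n) sums 0"
    by simp
  moreover have "(\<lambda>n. (1 - a * b * z) * (1 - z) * T n - (1 - b * z) * (1 - a * z) * T' n) sums
      ((1 - a * b * z) * (1 - z) * suminf T - (1 - b * z) * (1 - a * z) * suminf T')"
    by (intro sums_diff sums_mult summable_sums sT sT')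
  ultimately show ?thesis
    using sums_unique2 by (fastforce simp: T_def T'_def basic_hyp_def mult.assoc)
qed

lemma q_gauss_contiguity_iterate:
  assumes q: "cmod q < 1" and z: "cmod z < 1" and c: "\<And>n. qpoch (a * b * z) q n \<noteq> 0"
  shows "qpoch (a * b * z) q N * qpoch z q N * basic_hyp [a, b] [a * b * z] q z
       = qpoch (b * z) q N * qpoch (a * z) q N * basic_hyp [a, b] [a * b * (z * q ^ N)] q (z * q ^ N)"
proof (induction N)
  case (Suc N)
  have "cmod (z * q ^ N) < 1"
    using q z by (intro norm_mult_power_less_one) auto
  moreover have "qpoch (a * b * (z * q ^ N)) q n \<noteq> 0" for n
    using c[of "N + n"] by (simp add: qpoch_add mult.assoc)
  ultimately have step: "(1 - a * b * (z * q ^ N)) * (1 - z * q ^ N)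
        * basic_hyp [a, b] [a * b * (z * q ^ N)] q (z * q ^ N)
      = (1 - b * (z * q ^ N)) * (1 - a * (z * q ^ N))
        * basic_hyp [a, b] [a * b * (z * q ^ Suc N)] q (z * q ^ Suc N)"
    using q_gauss_contiguity[OF q, of "z * q ^ N" a b] by (simp add: mult_ac)
  have "qpoch (a * b * z) q (Suc N) * qpoch z q (Suc N) * basic_hyp [a, b] [a * b * z] q z
      = (1 - a * b * (z * q ^ N)) * (1 - z * q ^ N)
        * (qpoch (a * b * z) q N * qpoch z q N * basic_hyp [a, b] [a * b * z] q z)"
    by (simp add: qpoch_Suc mult_ac)
  also have "\<dots> = qpoch (b * z) q N * qpoch (a * z) q N * ((1 - a * b * (z * q ^ N)) * (1 - z * q ^ N)
        * basic_hyp [a, b] [a * b * (z * q ^ N)] q (z * q ^ N))"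
    unfolding Suc.IH by (simp add: mult_ac)
  also have "\<dots> = qpoch (b * z) q (Suc N) * qpoch (a * z) q (Suc N)
      * basic_hyp [a, b] [a * b * (z * q ^ Suc N)] q (z * q ^ Suc N)"
    unfolding step by (simp add: qpoch_Suc mult_ac)
  finally show ?case .
qed simp

lemma norm_phi_term_2_1_le:
  assumes q: "cmod q < 1" and c: "cmod (a * b * (z * q ^ N)) \<le> (1 - cmod q) / 2"
  shows "norm (phi_term [a, b] [a * b * (z * q ^ N)] q (z * q ^ N) k) \<le> 2 * norm (phi_term [a, b] [0] q z k)"
proof -
  have "norm (phi_term [a, b] [a * b * (z * q ^ N)] q (z * q ^ N) k)
      = norm (phi_term [a, b] [0] q z k) * (cmod q ^ N) ^ k / norm (qpoch (a * b * (z * q ^ N)) q k)"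
    by (simp add: phi_term_2_1 norm_mult norm_divide norm_power power_mult_distrib)
  also have "\<dots> \<le> norm (phi_term [a, b] [0] q z k) * 1 / (1 / 2)"
    using norm_qpoch_ge_half[OF q c] q by (intro frac_le mult_left_mono power_le_one) auto
  finally show ?thesis
    by simp
qed

lemma basic_hyp_2_1_tendsto_1:
  assumes q: "cmod q < 1" and z: "cmod z < 1"
  shows "(\<lambda>N. basic_hyp [a, b] [a * b * (z * q ^ N)] q (z * q ^ N)) \<longlonglongrightarrow> 1"
proof -
  define A where "A k N = phi_term [a, b] [a * b * (z * q ^ N)] q (z * q ^ N) k" for k N
  define M where "M k = 2 * norm (phi_term [a, b] [0] q z k)" for k
  have lim: "(\<lambda>N. A k N) \<longlonglongrightarrow> (if k = 0 then 1 else 0)" for k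
  proof -
    have "(\<lambda>N. A k N)
        \<longlonglongrightarrow> qpoch a q k * qpoch b q k / (qpoch q q k * qpoch (a * b * (z * 0)) q k) * (z * 0) ^ k"
      unfolding A_def phi_term_2_1 qpoch_def
      by (intro tendsto_intros LIMSEQ_power_zero q) (simp add: qpoch_def[symmetric] qpoch_q_nonzero[OF q])
    then show ?thesis
      by (cases k) (simp_all add: qpoch_def)
  qed
  have "(\<lambda>N. cmod (a * b * z) * cmod q ^ N) \<longlonglongrightarrow> cmod (a * b * z) * 0"
    by (intro tendsto_intros LIMSEQ_power_zero) (use q in simp)
  moreover have "cmod (a * b * z) * 0 < (1 - cmod q) / 2"
    using q by simp
  ultimately have "eventually (\<lambda>N. cmod (a * b * z) * cmod q ^ N < (1 - cmod q) / 2) sequentially"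
    by (rule order_tendstoD)
  then obtain N0 where N0: "\<And>N. N \<ge> N0 \<Longrightarrow> cmod (a * b * z) * cmod q ^ N < (1 - cmod q) / 2"
    by (auto simp: eventually_sequentially)
  have bound: "norm (A k N) \<le> M k" if "N \<ge> N0" for k N
    using N0[OF that] unfolding A_def M_def
    by (intro norm_phi_term_2_1_le q) (simp add: norm_mult norm_power mult.assoc)
  have "eventually (\<lambda>(k, N). norm (A k N) \<le> M k) (sequentially \<times>\<^sub>F sequentially)"
    unfolding eventually_prod_sequentially using bound by (intro exI[of _ N0]) auto
  moreover have "summable M"
    unfolding M_def by (intro summable_mult summable_norm_phi_term_2_1 q z) simp
  ultimately have "(\<lambda>N. suminf (\<lambda>k. A k N)) \<longlonglongrightarrow> (\<Sum>k. if k = 0 then 1 else 0)"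
    using tannerys_theorem[OF lim] by simp
  moreover have "(\<Sum>k. if k = 0 then 1 else 0) = (1 :: complex)"
    using sums_single[of 0 "\<lambda>_. 1 :: complex"] by (simp add: sums_iff)
  ultimately show ?thesis
    by (simp add: A_def basic_hyp_def)
qed

theorem q_gauss:
  assumes q: "cmod q < 1" and z: "cmod z < 1" and c: "\<And>n. qpoch (a * b * z) q n \<noteq> 0"
  shows "qpoch_inf (a * b * z) q * qpoch_inf z q * basic_hyp [a, b] [a * b * z] q z
       = qpoch_inf (b * z) q * qpoch_inf (a * z) q"
proof -
  have "(\<lambda>N. qpoch (a * b * z) q N * qpoch z q N * basic_hyp [a, b] [a * b * z] q z)
      \<longlonglongrightarrow> qpoch_inf (a * b * z) q * qpoch_inf z q * basic_hyp [a, b] [a * b * z] q z"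
    by (intro tendsto_intros qpoch_tendsto q)
  moreover have "(\<lambda>N. qpoch (a * b * z) q N * qpoch z q N * basic_hyp [a, b] [a * b * z] q z)
      \<longlonglongrightarrow> qpoch_inf (b * z) q * qpoch_inf (a * z) q * 1"
    unfolding q_gauss_contiguity_iterate[OF q z c]
    by (intro tendsto_intros qpoch_tendsto basic_hyp_2_1_tendsto_1 q z)
  ultimately show ?thesis
    using LIMSEQ_unique by fastforce
qed

lemma qpoch_inverse_power_eq_0:
  assumes "q \<noteq> 0" and "n < k"
  shows "qpoch (inverse q ^ n) q k = 0"
  using assms by (auto simp: qpoch_eq_0_iff power_inverse)

lemma inverse_power_Suc_mult:
  fixes q :: complex
  assumes "q \<noteq> 0"
  shows "inverse q ^ Suc n * q = inverse q ^ n"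
  using assms by (simp add: power_Suc2 mult.assoc del: power_Suc)

lemma phi_term_2_1_Suc_left:
  assumes "cmod q < 1" and "qpoch c q (Suc n) \<noteq> 0"
  shows "phi_term [a, b] [c] q z (Suc n) = phi_term [a * q, b] [c] q z n *
     ((1 - a) * (1 - b * q ^ n) * z / ((1 - q * q ^ n) * (1 - c * q ^ n)))"
proof -
  have "qpoch q q (Suc n) \<noteq> 0"
    using qpoch_q_nonzero assms(1) by blast
  with assms(2) show ?thesis
    unfolding phi_term_2_1 qpoch_Suc_left[of a] qpoch_Suc[of b] qpoch_Suc[of q q] qpoch_Suc[of c]
    by (simp add: field_simps)
qed

lemma q_chu_vandermonde_certificate:
  assumes q: "cmod q < 1" "q \<noteq> 0" and D: "qpoch D q (Suc j) \<noteq> 0"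
  shows "(1 - D * q ^ n) * q ^ r * phi_term [inverse q ^ Suc n, inverse q ^ r] [D] q q (Suc j)
       - (1 - D * q ^ r * q ^ n) * phi_term [inverse q ^ n, inverse q ^ r] [D] q q (Suc j)
     = phi_term [inverse q ^ n, inverse q ^ r] [D] q q (Suc j) * (q ^ r * q * inverse q ^ Suc (Suc j) - 1)
       - phi_term [inverse q ^ n, inverse q ^ r] [D] q q j * (q ^ r * q * inverse q ^ Suc j - 1)"
proof -
  have cancel: "a1 * (T * (P1 / E)) - a2 * (T * (P2 / E)) = T * (P2 / E) * c1 - T * c2"
    if "E \<noteq> 0" and "a1 * P1 - a2 * P2 = P2 * c1 - E * c2" for a1 a2 P1 P2 E c1 c2 T :: complex
  proof -
    have "a1 * (T * (P1 / E)) - a2 * (T * (P2 / E)) = T * (a1 * P1 - a2 * P2) / E"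
      by (simp add: algebra_simps diff_divide_distrib)
    also have "\<dots> = T * (P2 * c1 - E * c2) / E"
      using that(2) by simp
    also have "\<dots> = T * (P2 / E) * c1 - T * c2"
      using that(1) by (simp add: field_simps)
    finally show ?thesis .
  qed
  have nz: "1 - q * q ^ j \<noteq> 0" "1 - D * q ^ j \<noteq> 0"
    using qpoch_q_nonzero[OF q(1), of "Suc j"] D by (auto simp: qpoch_Suc)
  show ?thesis
    unfolding phi_term_2_1_Suc_left[OF q(1) D, of "inverse q ^ Suc n"] inverse_power_Suc_mult[OF q(2)]
    unfolding phi_term_2_1_Suc[OF q(1) D]
  proof (rule cancel)
    show "(1 - q * q ^ j) * (1 - D * q ^ j) \<noteq> 0"
      using nz by simp
  qed (use q(2) in \<open>simp add: power_inverse field_simps; algebra\<close>)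
qed

lemma q_chu_vandermonde_step:
  assumes q: "cmod q < 1" "q \<noteq> 0" and D: "\<And>k. qpoch D q k \<noteq> 0"
  shows "(1 - D * q ^ n) * q ^ r * (\<Sum>k\<le>Suc n. phi_term [inverse q ^ Suc n, inverse q ^ r] [D] q q k)
       = (1 - D * q ^ r * q ^ n) * (\<Sum>k\<le>n. phi_term [inverse q ^ n, inverse q ^ r] [D] q q k)"
proof -
  define t where "t m k = phi_term [inverse q ^ m, inverse q ^ r] [D] q q k" for m k
  \<comment> \<open>a Gosper certificate: a rational multiple of the previous summand\<close>
  define G where "G k = (if k = 0 then 0 else t n (k - 1) * (q ^ r * q * inverse q ^ k - 1))" for k
  have t_vanish: "t n k = 0" if "n < k" for k
    using qpoch_inverse_power_eq_0[OF q(2) that] by (simp add: t_def phi_term_2_1)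
  have telescope: "(1 - D * q ^ n) * q ^ r * t (Suc n) k - (1 - D * q ^ r * q ^ n) * t n k
      = G (Suc k) - G k" for k
  proof (cases k)
    case 0
    then show ?thesis
      using q(2) by (simp add: t_def G_def phi_term_2_1 power_inverse field_simps)
  next
    case (Suc j)
    have "G (Suc (Suc j)) - G (Suc j) = t n (Suc j) * (q ^ r * q * inverse q ^ Suc (Suc j) - 1)
        - t n j * (q ^ r * q * inverse q ^ Suc j - 1)"
      by (simp add: G_def)
    then show ?thesis
      unfolding Suc t_def by (simp only: q_chu_vandermonde_certificate[OF q D])
  qed
  have tsum: "(\<Sum>k\<le>Suc n. t n k) = (\<Sum>k\<le>n. t n k)"
    by (simp add: t_vanish)
  have "(1 - D * q ^ n) * q ^ r * (\<Sum>k\<le>Suc n. t (Suc n) k) - (1 - D * q ^ r * q ^ n) * (\<Sum>k\<le>n. t n k)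
      = (\<Sum>k<Suc (Suc n). (1 - D * q ^ n) * q ^ r * t (Suc n) k - (1 - D * q ^ r * q ^ n) * t n k)"
    unfolding tsum[symmetric] by (simp only: sum_subtractf sum_distrib_left lessThan_Suc_atMost)
  also have "\<dots> = 0"
    unfolding telescope sum_lessThan_telescope by (simp add: G_def t_vanish)
  finally show ?thesis
    by (simp add: t_def del: power_Suc)
qed

theorem q_chu_vandermonde:
  assumes q: "cmod q < 1" "q \<noteq> 0" and D: "\<And>k. qpoch D q k \<noteq> 0"
  shows "qpoch (D * q ^ r) q n
       = qpoch D q n * q ^ (r * n) * (\<Sum>k\<le>n. phi_term [inverse q ^ n, inverse q ^ r] [D] q q k)"
proof (induction n)
  case (Suc n)
  have "qpoch (D * q ^ r) q (Suc n) = qpoch D q n * q ^ (r * n)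
      * ((1 - D * q ^ r * q ^ n) * (\<Sum>k\<le>n. phi_term [inverse q ^ n, inverse q ^ r] [D] q q k))"
    by (simp add: qpoch_Suc Suc.IH mult.assoc)
  also have "\<dots> = qpoch D q n * q ^ (r * n)
      * ((1 - D * q ^ n) * q ^ r * (\<Sum>k\<le>Suc n. phi_term [inverse q ^ Suc n, inverse q ^ r] [D] q q k))"
    by (simp only: q_chu_vandermonde_step[OF q D])
  also have "\<dots> = qpoch D q (Suc n) * q ^ (r * Suc n)
      * (\<Sum>k\<le>Suc n. phi_term [inverse q ^ Suc n, inverse q ^ r] [D] q q k)"
    by (simp add: qpoch_Suc power_add mult_ac del: power_Suc)
  finally show ?case .
qed (simp add: phi_term_2_1)

lemma inverse_power_mult_power:
  fixes q :: complex
  assumes "q \<noteq> 0" and "j \<le> k"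
  shows "inverse q ^ k * q ^ j = inverse q ^ (k - j)"
  using assms by (simp add: power_diff power_inverse divide_inverse)

lemma qpoch_reverse:
  fixes q w :: complex
  assumes q: "q \<noteq> 0" and w: "w \<noteq> 0"
  shows "qpoch (w * inverse q ^ k) q k = w ^ k * (\<Prod>i<k. - (inverse q ^ Suc i)) * qpoch (q / w) q k"
proof -
  have "qpoch (w * inverse q ^ k) q k = (\<Prod>j<k. 1 - w * inverse q ^ Suc (k - Suc j))"
    unfolding qpoch_def
  proof (rule prod.cong[OF refl])
    fix j assume "j \<in> {..<k}"
    then have "inverse q ^ k * q ^ j = inverse q ^ Suc (k - Suc j)"
      using inverse_power_mult_power[OF q, of j k] by (simp add: Suc_diff_Suc)
    then show "1 - w * inverse q ^ k * q ^ j = 1 - w * inverse q ^ Suc (k - Suc j)"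
      by (simp add: mult.assoc)
  qed
  also have "\<dots> = (\<Prod>i<k. 1 - w * inverse q ^ Suc i)"
    by (rule prod.nat_diff_reindex)
  also have "\<dots> = (\<Prod>i<k. (w * - (inverse q ^ Suc i)) * (1 - q / w * q ^ i))"
    using q w by (intro prod.cong refl) (simp add: power_inverse field_simps)
  also have "\<dots> = w ^ k * (\<Prod>i<k. - (inverse q ^ Suc i)) * qpoch (q / w) q k"
    by (simp only: prod.distrib prod_constant card_lessThan qpoch_def)
  finally show ?thesis .
qed

lemma phi_term_chu_product_shift:
  fixes q A B C D w :: complex
  assumes q: "cmod q < 1" "q \<noteq> 0"
    and C: "\<And>n. qpoch C q n \<noteq> 0" and D: "\<And>n. qpoch D q n \<noteq> 0"
  shows "phi_term [A, B] [C] q w (m + k) * phi_term [inverse q ^ (m + k), inverse q ^ r] [D] q q k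
       = phi_term [A, B] [C] q w k * (\<Prod>i<k. - (inverse q ^ Suc i)) * qpoch (inverse q ^ r) q k * q ^ k
           / qpoch D q k * phi_term [A * q ^ k, B * q ^ k] [C * q ^ k] q (w * inverse q ^ k) m"
proof -
  have reverse: "qpoch (inverse q ^ (m + k)) q k
      = (inverse q ^ m) ^ k * (\<Prod>i<k. - (inverse q ^ Suc i)) * qpoch (q * q ^ m) q k"
  proof -
    have "inverse q ^ m * inverse q ^ k = inverse q ^ (m + k)" and "q / inverse q ^ m = q * q ^ m"
      by (simp_all add: power_add power_inverse divide_inverse)
    then show ?thesis
      using qpoch_reverse[of q "inverse q ^ m" k] q(2) by simp
  qed
  have split: "qpoch a q (m + k) = qpoch a q k * qpoch (a * q ^ k) q m" for a
    using qpoch_add[of a q k m] by (simp add: add.commute)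
  have "qpoch q q m \<noteq> 0" "qpoch (q * q ^ m) q k \<noteq> 0" "qpoch q q k \<noteq> 0"
    "qpoch C q k \<noteq> 0" "qpoch (C * q ^ k) q m \<noteq> 0"
    using qpoch_q_nonzero[OF q(1), of "m + k"] qpoch_q_nonzero[OF q(1)] C[of "k + m"]
    by (auto simp: qpoch_add)
  then show ?thesis
    unfolding phi_term_2_1 reverse qpoch_add[of q q m k] split[of A] split[of B] split[of C]
    using D[of k] q(2)
    by (simp add: power_add power_mult_distrib power_mult[symmetric] field_simps)
qed

lemma phi_term_chu_product_sums_basic_hyp:
  fixes q A B C D w :: complex
  assumes q: "cmod q < 1" "q \<noteq> 0"
    and C: "\<And>n. qpoch C q n \<noteq> 0" and D: "\<And>n. qpoch D q n \<noteq> 0"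
    and z: "cmod (w * inverse q ^ k) < 1"
  shows "(\<lambda>n. phi_term [A, B] [C] q w n * phi_term [inverse q ^ n, inverse q ^ r] [D] q q k) sums
     (phi_term [A, B] [C] q w k * (\<Prod>i<k. - (inverse q ^ Suc i)) * qpoch (inverse q ^ r) q k * q ^ k
      / qpoch D q k * basic_hyp [A * q ^ k, B * q ^ k] [C * q ^ k] q (w * inverse q ^ k))"
    (is "?g sums ?s")
proof -
  have "qpoch (C * q ^ k) q n \<noteq> 0" for n
    using C[of "k + n"] by (simp add: qpoch_add)
  then have "(\<lambda>m. ?g (m + k)) sums ?s"
    unfolding phi_term_chu_product_shift[OF q C D] basic_hyp_def
    by (intro sums_mult summable_sums summable_phi_term_2_1[OF q(1) z])
  moreover have "(\<Sum>n<k. ?g n) = 0"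
    using qpoch_inverse_power_eq_0[OF q(2)] by (intro sum.neutral) (simp add: phi_term_2_1)
  ultimately show ?thesis
    using sums_iff_shift[of ?g k ?s] by simp
qed

lemma qpoch_inf_reverse:
  assumes "cmod q < 1" and "q \<noteq> 0" and "w \<noteq> 0"
  shows "qpoch_inf (w * inverse q ^ k) q
       = w ^ k * (\<Prod>i<k. - (inverse q ^ Suc i)) * qpoch (q / w) q k * qpoch_inf w q"
proof -
  have cancel: "w * inverse q ^ k * q ^ k = w"
    using assms(2) by (simp add: power_inverse)
  show ?thesis
    using qpoch_inf_split[OF assms(1), of "w * inverse q ^ k" k] unfolding qpoch_reverse[OF assms(2,3)] cancel .
qed

lemma phi_term_chu_product_sums:
  fixes q A B C D w :: complex and r k :: nat
  assumes q: "cmod q < 1" "q \<noteq> 0" and C: "C = A * B * w" and w: "w \<noteq> 0"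
    and Cn: "\<And>n. qpoch C q n \<noteq> 0" and Dn: "\<And>n. qpoch D q n \<noteq> 0"
    and wn: "qpoch (q / w) q k \<noteq> 0"
    and Cinf: "qpoch_inf C q \<noteq> 0" and winf: "qpoch_inf w q \<noteq> 0"
    and z: "cmod (w * inverse q ^ r) < 1" and k: "k \<le> r"
  shows "(\<lambda>n. phi_term [A, B] [C] q w n * phi_term [inverse q ^ n, inverse q ^ r] [D] q q k) sums
     (qpoch_inf (A * w) q * qpoch_inf (B * w) q / (qpoch_inf w q * qpoch_inf C q)
      * phi_term [A, inverse q ^ r, B] [q / w, D] q q k)"
proof -
  define W where "W = (\<Prod>i<k. - (inverse q ^ Suc i))"
  define z' where "z' = w * inverse q ^ k"
  define S where "S = basic_hyp [A * q ^ k, B * q ^ k] [C * q ^ k] q z'"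
  have "inverse q ^ r * q ^ (r - k) = inverse q ^ k"
    using inverse_power_mult_power[OF q(2), of "r - k" r] k by simp
  then have z'_small: "cmod z' < 1"
    using norm_mult_power_less_one[OF _ z, of q "r - k"] q(1) by (simp add: z'_def mult.assoc)
  have "inverse q ^ k * q ^ k = 1"
    using q(2) by (simp add: power_inverse)
  then have C': "A * q ^ k * (B * q ^ k) * z' = C * q ^ k" and Bz: "B * q ^ k * z' = B * w"
    and Az: "A * q ^ k * z' = A * w"
    by (simp_all add: C z'_def mult_ac)
  moreover have "qpoch (C * q ^ k) q n \<noteq> 0" for n
    using Cn[of "k + n"] by (simp add: qpoch_add)
  ultimately have gauss: "qpoch_inf (C * q ^ k) q * qpoch_inf z' q * S = qpoch_inf (B * w) q * qpoch_inf (A * w) q"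
    using q_gauss[OF q(1) z'_small, of "A * q ^ k" "B * q ^ k"] unfolding S_def C' Bz Az by simp
  have "qpoch_inf C q = qpoch C q k * qpoch_inf (C * q ^ k) q"
    by (rule qpoch_inf_split[OF q(1)])
  moreover have "qpoch_inf z' q = w ^ k * W * qpoch (q / w) q k * qpoch_inf w q"
    unfolding z'_def W_def by (rule qpoch_inf_reverse[OF q w])
  moreover have "W \<noteq> 0"
    using q(2) by (simp add: W_def)
  ultimately have "phi_term [A, B] [C] q w k * W * qpoch (inverse q ^ r) q k * q ^ k / qpoch D q k * S
      = qpoch_inf (A * w) q * qpoch_inf (B * w) q / (qpoch_inf w q * qpoch_inf C q)
        * phi_term [A, inverse q ^ r, B] [q / w, D] q q k"
    using gauss Cn[of k] Dn[of k] wn winf Cinf w qpoch_q_nonzero[OF q(1), of k]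
    by (simp add: phi_term_2_1 phi_term_3_2 field_simps)
  then show ?thesis
    using phi_term_chu_product_sums_basic_hyp[OF q Cn Dn z'_small[unfolded z'_def], of A B r]
    by (simp add: W_def S_def z'_def)
qed

lemma sum_chu_terms_atMost:
  assumes "q \<noteq> 0"
  shows "(\<Sum>k\<le>n. phi_term [inverse q ^ n, inverse q ^ r] [D] q z k)
       = (\<Sum>k\<le>r. phi_term [inverse q ^ n, inverse q ^ r] [D] q z k)"
proof -
  have vanish: "phi_term [inverse q ^ n, inverse q ^ r] [D] q z k = 0" if "n < k \<or> r < k" for k
    using that qpoch_inverse_power_eq_0[OF assms] by (auto simp: phi_term_2_1)
  have "(\<Sum>k\<le>m. phi_term [inverse q ^ n, inverse q ^ r] [D] q z k)
      = (\<Sum>k\<le>n + r. phi_term [inverse q ^ n, inverse q ^ r] [D] q z k)" if "m = n \<or> m = r" for m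
    using that by (intro sum.mono_neutral_left) (auto intro: vanish)
  then show ?thesis
    by simp
qed

theorem basic_hyp_3_2_transformation:
  fixes q A B C D w :: complex and r :: nat
  assumes q: "cmod q < 1" "q \<noteq> 0" and C: "C = A * B * w" and w: "w \<noteq> 0"
    and Cn: "\<And>n. qpoch C q n \<noteq> 0" and Dn: "\<And>n. qpoch D q n \<noteq> 0"
    and wn: "\<And>n. qpoch (q / w) q n \<noteq> 0"
    and Cinf: "qpoch_inf C q \<noteq> 0" and winf: "qpoch_inf w q \<noteq> 0"
    and z: "cmod (w * inverse q ^ r) < 1"
  shows "basic_hyp [A, B, D * q ^ r] [C, D] q (w * inverse q ^ r)
       = qpoch_inf (A * w) q * qpoch_inf (B * w) q / (qpoch_inf w q * qpoch_inf C q)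
         * basic_hyp [A, inverse q ^ r, B] [q / w, D] q q"
proof -
  define F where "F = qpoch_inf (A * w) q * qpoch_inf (B * w) q / (qpoch_inf w q * qpoch_inf C q)"
  define g where "g k n = phi_term [A, B] [C] q w n * phi_term [inverse q ^ n, inverse q ^ r] [D] q q k" for k n
  have g_sums: "g k sums (F * phi_term [A, inverse q ^ r, B] [q / w, D] q q k)" if "k \<in> {..r}" for k
    unfolding g_def F_def using that
    by (intro phi_term_chu_product_sums[OF q C w Cn Dn wn Cinf winf z]) auto
  have expand: "phi_term [A, B, D * q ^ r] [C, D] q (w * inverse q ^ r) n = (\<Sum>k\<le>r. g k n)" for n
  proof -
    have pw: "(w * inverse q ^ r) ^ n = w ^ n / q ^ (r * n)"
      by (simp add: power_mult_distrib power_mult power_inverse divide_inverse)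
    have cv: "qpoch (D * q ^ r) q n
        = qpoch D q n * q ^ (r * n) * (\<Sum>k\<le>r. phi_term [inverse q ^ n, inverse q ^ r] [D] q q k)"
      using q_chu_vandermonde[OF q Dn] sum_chu_terms_atMost[OF q(2)] by simp
    have "phi_term [A, B, D * q ^ r] [C, D] q (w * inverse q ^ r) n
        = phi_term [A, B] [C] q w n * (\<Sum>k\<le>r. phi_term [inverse q ^ n, inverse q ^ r] [D] q q k)"
      unfolding phi_term_3_2 phi_term_2_1[of A B C] cv pw
      using Dn[of n] q(2) by (simp add: field_simps del: sum.atMost_Suc)
    then show ?thesis
      by (simp add: g_def sum_distrib_left)
  qed
  have "basic_hyp [A, B, D * q ^ r] [C, D] q (w * inverse q ^ r) = (\<Sum>n. \<Sum>k\<le>r. g k n)"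
    by (simp add: basic_hyp_def expand)
  also have "\<dots> = (\<Sum>k\<le>r. \<Sum>n. g k n)"
    using g_sums by (intro suminf_sum) (auto dest: sums_summable)
  also have "\<dots> = F * (\<Sum>k\<le>r. phi_term [A, inverse q ^ r, B] [q / w, D] q q k)"
    using g_sums by (simp add: sums_iff sum_distrib_left)
  also have "(\<Sum>k\<le>r. phi_term [A, inverse q ^ r, B] [q / w, D] q q k)
      = basic_hyp [A, inverse q ^ r, B] [q / w, D] q q"
    unfolding basic_hyp_def
    by (rule suminf_finite[symmetric]) (auto simp: phi_term_3_2 qpoch_inverse_power_eq_0[OF q(2)])
  finally show ?thesis
    by (simp add: F_def)
qed

theorem mainTheorem12:
  fixes q x y a b t u v :: complex and r :: nat
  assumes "0 < cmod q" and "cmod q < 1"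
    and "x \<noteq> 0" and "a \<noteq> 0" and "b \<noteq> 0" and "t \<noteq> 0" and "u \<noteq> 0"
    and "v / u = q powi (- int r)"
    and "\<And>n. qpoch (y * q / a) q n \<noteq> 0"
    and "\<And>n. qpoch (q / (a * u * t)) q n \<noteq> 0"
    and "\<And>n. qpoch (q / (x * b * t)) q n \<noteq> 0"
    and "qpoch_inf (x * b * t) q \<noteq> 0" and "qpoch_inf (y * q / a) q \<noteq> 0"
    and "cmod (x * b * v * t / u) < 1"
  shows "basic_hyp [y / x, q / (a * b * t), q / (a * v * t)] [y * q / a, q / (a * u * t)] q
            (x * b * v * t / u)
       = (qpoch_inf (y * b * t) q * qpoch_inf (x * q / a) q)
         / (qpoch_inf (x * b * t) q * qpoch_inf (y * q / a) q)
         * basic_hyp [y / x, v / u, q / (a * b * t)] [q / (x * b * t), q / (a * u * t)] q q"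
proof -
  have q: "cmod q < 1" "q \<noteq> 0"
    using assms(1,2) by auto
  have vu: "v / u = inverse q ^ r"
    using assms(8) by (simp add: power_int_minus power_inverse)
  then have v: "v = u * inverse q ^ r"
    using assms(7) by (simp add: field_simps)
  have "q / (a * v * t) = q / (a * u * t) * q ^ r"
    and z: "x * b * v * t / u = x * b * t * inverse q ^ r"
    and "y * b * t = y / x * (x * b * t)" and "x * q / a = q / (a * b * t) * (x * b * t)"
    using assms(3-7) q(2) by (simp_all add: v power_inverse field_simps)
  moreover have "basic_hyp [y / x, q / (a * b * t), q / (a * u * t) * q ^ r] [y * q / a, q / (a * u * t)] q
      (x * b * t * inverse q ^ r)
    = qpoch_inf (y / x * (x * b * t)) q * qpoch_inf (q / (a * b * t) * (x * b * t)) q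
      / (qpoch_inf (x * b * t) q * qpoch_inf (y * q / a) q)
      * basic_hyp [y / x, inverse q ^ r, q / (a * b * t)] [q / (x * b * t), q / (a * u * t)] q q"
    using assms(14) unfolding z
    by (intro basic_hyp_3_2_transformation q assms(9-13)) (use assms(3-6) in auto)
  ultimately show ?thesis
    by (simp only: vu)
qed

end
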